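(* Let $(V,Y_1,\mathbf 1,T_1)$ be a vertex algebra (in dimension 1) equipped with an action of $\mathfrak c_D$ such that the generator $T_1\in\mathfrak c_D$ acts as the translation operator of $V$. If the action of $\mathfrak c_D$ is local and $\mathfrak c_D\mathbf 1=0$, then for all $a\in V$ and $2\le\alpha,\beta\le D$: $$[T_\alpha,Y_1(a,x)]=Y_1(T_\alpha a,x),\qquad [H,Y_1(a,x)]=Y_1(Ha,x)+x\partial_xY_1(a,x),$$ $$[\Omega_{\alpha\beta},Y_1(a,x)]=Y_1(\Omega_{\alpha\beta}a,x),\qquad [\Omega_{1\alpha},Y_1(a,x)]=Y_1(\Omega_{1\alpha}a,x)+xY_1(T_\alpha a,x),$$ $$[C_\alpha,Y_1(a,x)]=Y_1(C_\alpha a,x)+2xY_1(\Omega_{1\alpha}a,x)+x^2Y_1(T_\alpha a,x),$$ $$[C_1,Y_1(a,x)]=Y_1(C_1a,x)-2xY_1(Ha,x)-x^2\partial_xY_1(a,x).$$ Conversely, if these commutation relations hold for all $a\in V$, then the action of $\mathfrak c_D$ is local and annihilates the vacuum.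
   Context: A vertex algebra (in dimension 1) is a complex superspace $V$ with even vacuum $\mathbf 1$, even map $a\otimes b\mapsto Y_1(a,x)b\in V(\!(x)\!)$, and even $T_1$ with $T_1\mathbf 1=0$, $Y_1(\mathbf 1,x)=\mathrm{id}$, $Y_1(a,x)\mathbf 1\in V[\![x]\!]$ with value $a$ at $x=0$, $[T_1,Y_1(a,x)]=\partial_xY_1(a,x)$, and locality: $(x-y)^{N}[Y_1(a,x),Y_1(b,y)]=0$ for some $N=N_{a,b}$ (supercommutator). An operator $X\in\operatorname{End}V$ is local if for all $a,b$ there is $N$ with $(x-y)^N[[X,Y_1(a,x)],Y_1(b,y)]=0$; the action of $\mathfrak c_D$ is local if every element acts as a local operator. $\mathfrak c_D$ is the Lie algebra spanned by $T_\alpha$, $H$, $\Omega_{\alpha\beta}=-\Omega_{\beta\alpha}$, $C_\alpha$ ($1\le\alpha,\beta\le D$) with relations: $[H,\Omega_{\alpha\beta}]=[T_\alpha,T_\beta]=[C_\alpha,C_\beta]=0$; $[\Omega_{\alpha\beta},T_\gamma]=\delta_{\alpha\gamma}T_\beta-\delta_{\beta\gamma}T_\alpha$; $[\Omega_{\alpha\beta},C_\gamma]=\delta_{\alpha\gamma}C_\beta-\delta_{\beta\gamma}C_\alpha$; $[H,T_\alpha]=T_\alpha$; $[H,C_\alpha]=-C_\alpha$; $[T_\alpha,C_\beta]=2\delta_{\alpha\beta}H-2\Omega_{\alpha\beta}$; $[\Omega_{\alpha_1\beta_1},\Omega_{\alpha_2\beta_2}]=\delta_{\alpha_1\alpha_2}\Omega_{\beta_1\beta_2}+\delta_{\beta_1\beta_2}\Omega_{\alpha_1\alpha_2}-\delta_{\alpha_1\beta_2}\Omega_{\beta_1\alpha_2}-\delta_{\beta_1\alpha_2}\Omega_{\alpha_1\beta_2}$.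 It acts on $V$ by even operators. *)

theory Defs
  imports Complex_Main
begin

text \<open>
  The super structure V = V0 + V1 is encoded by the
  linear parity involution P (P a = a on V0, P a = -a on V1).
  A formal series in x with coefficients in End V is a function int => ('v => 'v):
  Yc a n is the coefficient of x^n in Y_1(a,x).  Identities of formal series are
  stated coefficientwise.
\<close>

text \<open>Ordinary commutator of operators (used for even operators X).\<close>
definition sop_comm :: "('v \<Rightarrow> 'v) \<Rightarrow> ('v \<Rightarrow> 'v) \<Rightarrow> ('v \<Rightarrow> 'v::ab_group_add)" where
  "sop_comm X Z = (\<lambda>v. X (Z v) - Z (X v))"

text \<open>a is homogeneous of parity p (p = True means odd).\<close>
definition homog :: "('v \<Rightarrow> 'v) \<Rightarrow> 'v::ab_group_add \<Rightarrow> bool \<Rightarrow> bool" where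
  "homog P a p \<longleftrightarrow> P a = (if p then - a else a)"

definition even_op :: "('v \<Rightarrow> 'v) \<Rightarrow> ('v \<Rightarrow> 'v) \<Rightarrow> bool" where
  "even_op P X \<longleftrightarrow> (\<forall>v. X (P v) = P (X v))"

definition super_sign :: "bool \<Rightarrow> bool \<Rightarrow> complex" where
  "super_sign pa pb = (if pa \<and> pb then -1 else 1)"

text \<open>Coefficient of x^m y^n in (x-y)^N F(x,y), where the two-variable series
  F has coefficient F p q at x^p y^q.\<close>
definition mult_xy_pow ::
  "(complex \<Rightarrow> 'v \<Rightarrow> 'v::ab_group_add) \<Rightarrow> nat \<Rightarrow> (int \<Rightarrow> int \<Rightarrow> 'v \<Rightarrow> 'v) \<Rightarrow> int \<Rightarrow> int \<Rightarrow> 'v \<Rightarrow> 'v" where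
  "mult_xy_pow sc N F m n c =
     (\<Sum>k\<le>N. sc (of_nat (N choose k) * (-1) ^ k) (F (m - int (N - k)) (n - int k) c))"

definition local_fields ::
  "(complex \<Rightarrow> 'v \<Rightarrow> 'v::ab_group_add) \<Rightarrow> ('v \<Rightarrow> 'v) \<Rightarrow> ('v \<Rightarrow> int \<Rightarrow> 'v \<Rightarrow> 'v) \<Rightarrow> bool" where
  "local_fields sc P Yc \<longleftrightarrow>
     (\<forall>a b pa pb. homog P a pa \<longrightarrow> homog P b pb \<longrightarrow>
        (\<exists>N. \<forall>m n c. mult_xy_pow sc N
            (\<lambda>p q v. Yc a p (Yc b q v) - sc (super_sign pa pb) (Yc b q (Yc a p v))) m n c = 0))"

text \<open>An (even) operator X is local: (x-y)^N [[X,Y(a,x)],Y(b,y)] = 0 for all a, b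
  (homogeneous; the inner bracket is an ordinary commutator since X is even).\<close>
definition local_op ::
  "(complex \<Rightarrow> 'v \<Rightarrow> 'v::ab_group_add) \<Rightarrow> ('v \<Rightarrow> 'v) \<Rightarrow> ('v \<Rightarrow> int \<Rightarrow> 'v \<Rightarrow> 'v) \<Rightarrow> ('v \<Rightarrow> 'v) \<Rightarrow> bool" where
  "local_op sc P Yc X \<longleftrightarrow>
     (\<forall>a b pa pb. homog P a pa \<longrightarrow> homog P b pb \<longrightarrow>
        (\<exists>N. \<forall>m n c. mult_xy_pow sc N
            (\<lambda>p q v. sop_comm X (Yc a p) (Yc b q v)
                      - sc (super_sign pa pb) (Yc b q (sop_comm X (Yc a p) v))) m n c = 0))"

definition vertex_algebra ::
  "(complex \<Rightarrow> 'v \<Rightarrow> 'v::ab_group_add) \<Rightarrow> ('v \<Rightarrow> 'v) \<Rightarrow> ('v \<Rightarrow> int \<Rightarrow> 'v \<Rightarrow> 'v) \<Rightarrow> 'v \<Rightarrow> ('v \<Rightarrow> 'v) \<Rightarrow> bool" where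
  "vertex_algebra sc P Yc vac T \<longleftrightarrow>
     vector_space sc \<and>
     Vector_Spaces.linear sc sc P \<and> (\<forall>v. P (P v) = v) \<and>
     P vac = vac \<and>
     (\<forall>a n. Vector_Spaces.linear sc sc (Yc a n)) \<and>
     (\<forall>n b. Vector_Spaces.linear sc sc (\<lambda>a. Yc a n b)) \<and>
     (\<forall>a n b. Yc (P a) n (P b) = P (Yc a n b)) \<and>
     (\<forall>a b. \<exists>N. \<forall>n<N. Yc a n b = 0) \<and>
     Vector_Spaces.linear sc sc T \<and> even_op P T \<and>
     T vac = 0 \<and>
     (\<forall>n b. Yc vac n b = (if n = 0 then b else 0)) \<and>
     (\<forall>a n. n < 0 \<longrightarrow> Yc a n vac = 0) \<and>
     (\<forall>a. Yc a 0 vac = a) \<and>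
     (\<forall>a n b. sop_comm T (Yc a n) b = sc (of_int (n + 1)) (Yc a (n + 1) b)) \<and>
     local_fields sc P Yc"

definition cD_action ::
  "(complex \<Rightarrow> 'v \<Rightarrow> 'v::ab_group_add) \<Rightarrow> ('v \<Rightarrow> 'v) \<Rightarrow> nat \<Rightarrow> (nat \<Rightarrow> 'v \<Rightarrow> 'v) \<Rightarrow> ('v \<Rightarrow> 'v)
    \<Rightarrow> (nat \<Rightarrow> nat \<Rightarrow> 'v \<Rightarrow> 'v) \<Rightarrow> (nat \<Rightarrow> 'v \<Rightarrow> 'v) \<Rightarrow> bool" where
  "cD_action sc P D Tr H Om C \<longleftrightarrow>
     Vector_Spaces.linear sc sc H \<and> even_op P H \<and>
     (\<forall>\<alpha>\<in>{1..D}. Vector_Spaces.linear sc sc (Tr \<alpha>) \<and> even_op P (Tr \<alpha>) \<and>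
                  Vector_Spaces.linear sc sc (C \<alpha>) \<and> even_op P (C \<alpha>)) \<and>
     (\<forall>\<alpha>\<in>{1..D}. \<forall>\<beta>\<in>{1..D}. Vector_Spaces.linear sc sc (Om \<alpha> \<beta>) \<and> even_op P (Om \<alpha> \<beta>) \<and>
        (\<forall>v. Om \<alpha> \<beta> v = - Om \<beta> \<alpha> v)) \<and>
     (\<forall>\<alpha>\<in>{1..D}. \<forall>\<beta>\<in>{1..D}.
        (\<forall>v. sop_comm H (Om \<alpha> \<beta>) v = 0) \<and>
        (\<forall>v. sop_comm (Tr \<alpha>) (Tr \<beta>) v = 0) \<and>
        (\<forall>v. sop_comm (C \<alpha>) (C \<beta>) v = 0) \<and>
        (\<forall>\<gamma>\<in>{1..D}. \<forall>v. sop_comm (Om \<alpha> \<beta>) (Tr \<gamma>) v =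
            (if \<alpha> = \<gamma> then Tr \<beta> v else 0) - (if \<beta> = \<gamma> then Tr \<alpha> v else 0)) \<and>
        (\<forall>\<gamma>\<in>{1..D}. \<forall>v. sop_comm (Om \<alpha> \<beta>) (C \<gamma>) v =
            (if \<alpha> = \<gamma> then C \<beta> v else 0) - (if \<beta> = \<gamma> then C \<alpha> v else 0)) \<and>
        (\<forall>v. sop_comm (Tr \<alpha>) (C \<beta>) v = sc 2 ((if \<alpha> = \<beta> then H v else 0) - Om \<alpha> \<beta> v))) \<and>
     (\<forall>\<alpha>\<in>{1..D}. (\<forall>v. sop_comm H (Tr \<alpha>) v = Tr \<alpha> v) \<and>
                  (\<forall>v. sop_comm H (C \<alpha>) v = - C \<alpha> v)) \<and>
     (\<forall>\<alpha>1\<in>{1..D}. \<forall>\<beta>1\<in>{1..D}. \<forall>\<alpha>2\<in>{1..D}. \<forall>\<beta>2\<in>{1..D}. \<forall>v.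
        sop_comm (Om \<alpha>1 \<beta>1) (Om \<alpha>2 \<beta>2) v =
          (if \<alpha>1 = \<alpha>2 then Om \<beta>1 \<beta>2 v else 0) + (if \<beta>1 = \<beta>2 then Om \<alpha>1 \<alpha>2 v else 0)
          - (if \<alpha>1 = \<beta>2 then Om \<beta>1 \<alpha>2 v else 0) - (if \<beta>1 = \<alpha>2 then Om \<alpha>1 \<beta>2 v else 0))"

text \<open>The operators by which the elements of c_D (complex linear combinations of the
  generators) act.\<close>
definition cD_ops ::
  "(complex \<Rightarrow> 'v \<Rightarrow> 'v::ab_group_add) \<Rightarrow> nat \<Rightarrow> (nat \<Rightarrow> 'v \<Rightarrow> 'v) \<Rightarrow> ('v \<Rightarrow> 'v)
    \<Rightarrow> (nat \<Rightarrow> nat \<Rightarrow> 'v \<Rightarrow> 'v) \<Rightarrow> (nat \<Rightarrow> 'v \<Rightarrow> 'v) \<Rightarrow> ('v \<Rightarrow> 'v) set" where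
  "cD_ops sc D Tr H Om C =
     {X. \<exists>t h w c. \<forall>v. X v =
        (\<Sum>\<alpha>\<in>{1..D}. sc (t \<alpha>) (Tr \<alpha> v)) + sc h (H v)
        + (\<Sum>\<alpha>\<in>{1..D}. \<Sum>\<beta>\<in>{1..D}. sc (w \<alpha> \<beta>) (Om \<alpha> \<beta> v))
        + (\<Sum>\<alpha>\<in>{1..D}. sc (c \<alpha>) (C \<alpha> v))}"

end

theory Submission
  imports Defs
begin

text \<open>
  Both directions rest on Goddard's uniqueness theorem: a family F(x) of operators that is local
  with every field Y(b,y) and kills the vacuum vanishes. For a generator X, each proposed formula
  for [X, Y(a,x)] is built from fields, their shifts and x \<partial>_x, so it is local whenever the fields
  are. If X is local and X vac = 0, the formula and the bracket agree on the vacuum: by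
  [T_1, Y(a,x)] = \<partial>_x Y(a,x) the coefficients Y(a)_p vac are generated from a by T_1, and the
  relations of c_D between X and T_1 give X Y(a)_p vac by induction on p; uniqueness then yields
  the formula. Conversely the formulas make each [X, Y(a,x)] local, and evaluating them at
  a = vac, x^0 on the vacuum gives X vac = 0.
\<close>

lemmas linear_map_add = module_hom.add[OF module_hom_linearI]
  and linear_map_diff = module_hom.diff[OF module_hom_linearI]
  and linear_map_neg = module_hom.neg[OF module_hom_linearI]
  and linear_map_scale = module_hom.scale[OF module_hom_linearI]
  and linear_map_zero = module_hom.zero[OF module_hom_linearI]
  and linear_map_sum = module_hom.sum[OF module_hom_linearI]

lemma int_induct_from_zero [case_names negative zero step]:
  fixes p :: int
  assumes "\<And>p. p < 0 \<Longrightarrow> Q p" and "Q 0" and "\<And>p. 0 \<le> p \<Longrightarrow> Q p \<Longrightarrow> Q (p + 1)"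
  shows "Q p"
proof (cases "p < 0")
  case True
  then show ?thesis by (rule assms(1))
next
  case False
  then have "0 \<le> p" by simp
  then show ?thesis by (induction p rule: int_ge_induct) (use assms(2,3) in auto)
qed

section \<open>Coefficients of (x - y)^N F(x, y)\<close>

locale complex_vs = vector_space sc for sc :: "complex \<Rightarrow> 'v::ab_group_add \<Rightarrow> 'v"
begin

lemma scale_two: "sc 2 x = x + x"
  using scale_left_distrib[of 1 1 x] by (simp add: one_add_one)

lemma scale_mult_two: "sc (c * 2) x = sc c x + sc c x"
  by (metis scale_scale scale_two scale_right_distrib)

lemma scale_of_int_succ_cancel:
  assumes "0 \<le> p" and "sc (of_int (p + 1)) x = sc (of_int (p + 1)) y"
  shows "x = y"
proof -
  have "(of_int (p + 1) :: complex) \<noteq> 0"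
    using assms(1) by (metis of_int_eq_0_iff add_nonneg_pos zero_less_one less_irrefl)
  then show ?thesis using assms(2) scale_cancel_left by blast
qed

lemma sum_scale_indicator: "finite A \<Longrightarrow> a \<in> A \<Longrightarrow> (\<Sum>x\<in>A. sc (if x = a then 1 else 0) (f x)) = f a"
  by (simp add: if_distrib[of "\<lambda>k. sc k _"] sum.delta cong: if_cong)

lemma mult_xy_pow_altdef:
  "mult_xy_pow sc N G m n c =
     (\<Sum>k\<le>N. sc (of_nat (N choose k) * (-1) ^ k) (G (m - int N + int k) (n - int k) c))"
  unfolding mult_xy_pow_def by (rule sum.cong) (auto simp: of_nat_diff algebra_simps)

lemma mult_xy_pow_add:
  "mult_xy_pow sc N (\<lambda>p q v. F p q v + G p q v) m n c =
     mult_xy_pow sc N F m n c + mult_xy_pow sc N G m n c"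
  unfolding mult_xy_pow_def by (simp add: scale_right_distrib sum.distrib)

lemma mult_xy_pow_diff:
  "mult_xy_pow sc N (\<lambda>p q v. F p q v - G p q v) m n c =
     mult_xy_pow sc N F m n c - mult_xy_pow sc N G m n c"
  unfolding mult_xy_pow_def by (simp add: scale_right_diff_distrib sum_subtractf)

lemma mult_xy_pow_scale:
  "mult_xy_pow sc N (\<lambda>p q v. sc k (F p q v)) m n c = sc k (mult_xy_pow sc N F m n c)"
  unfolding mult_xy_pow_def by (simp add: scale_sum_right mult_ac)

lemma mult_xy_pow_zero: "mult_xy_pow sc N (\<lambda>p q v. 0) m n c = 0"
  unfolding mult_xy_pow_def by simp

lemma mult_xy_pow_shift:
  "mult_xy_pow sc N (\<lambda>p q v. F (p - j) q v) m n c = mult_xy_pow sc N F (m - j) n c"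
  unfolding mult_xy_pow_def by (simp add: algebra_simps)

text \<open>Coefficientwise form of (x - y)^(N+1) F = x (x - y)^N F - y (x - y)^N F.\<close>

lemma mult_xy_pow_Suc:
  "mult_xy_pow sc (Suc N) F m n c = mult_xy_pow sc N F (m - 1) n c - mult_xy_pow sc N F m (n - 1) c"
proof -
  define g where "g k = F (m - int (Suc N) + int k) (n - int k) c" for k
  define A where "A N k = (of_nat (N choose k) * (-1) ^ k :: complex)" for N k
  have A_Suc: "A (Suc N) (Suc k) = A N (Suc k) - A N k" for k
    unfolding A_def by (simp add: algebra_simps)
  have "mult_xy_pow sc (Suc N) F m n c = (\<Sum>k\<le>Suc N. sc (A (Suc N) k) (g k))"
    unfolding mult_xy_pow_altdef g_def A_def ..
  also have "\<dots> = sc (A (Suc N) 0) (g 0) + (\<Sum>k\<le>N. sc (A (Suc N) (Suc k)) (g (Suc k)))"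
    by (rule sum.atMost_Suc_shift)
  also have "\<dots> = (sc (A N 0) (g 0) + (\<Sum>k\<le>N. sc (A N (Suc k)) (g (Suc k))))
                   - (\<Sum>k\<le>N. sc (A N k) (g (Suc k)))"
    by (simp only: A_Suc scale_left_diff_distrib sum_subtractf add_diff_eq) (simp add: A_def)
  also have "sc (A N 0) (g 0) + (\<Sum>k\<le>N. sc (A N (Suc k)) (g (Suc k))) = (\<Sum>k\<le>Suc N. sc (A N k) (g k))"
    by (rule sum.atMost_Suc_shift[symmetric])
  also have "\<dots> = mult_xy_pow sc N F (m - 1) n c"
    unfolding mult_xy_pow_altdef g_def A_def by (simp add: algebra_simps)
  also have "(\<Sum>k\<le>N. sc (A N k) (g (Suc k))) = mult_xy_pow sc N F m (n - 1) c"
    unfolding mult_xy_pow_altdef g_def A_def by (simp add: algebra_simps)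
  finally show ?thesis .
qed

lemma mult_xy_pow_vanishes_mono:
  assumes "\<forall>m n c. mult_xy_pow sc N F m n c = 0" and "N \<le> M"
  shows "mult_xy_pow sc M F m n c = 0"
proof -
  obtain d where "M = N + d" using assms(2) le_Suc_ex by blast
  have "\<forall>m n c. mult_xy_pow sc (N + d) F m n c = 0"
    by (induction d) (simp_all add: assms(1) mult_xy_pow_Suc)
  then show ?thesis using \<open>M = N + d\<close> by simp
qed

text \<open>Coefficientwise form of
  (x - y)^(N+1) x \<partial>_x F = x \<partial>_x ((x - y)^(N+1) F) - (N + 1) x (x - y)^N F.\<close>

lemma mult_xy_pow_deriv:
  "mult_xy_pow sc (Suc N) (\<lambda>p q v. sc (of_int p) (F p q v)) m n c =
     sc (of_int m) (mult_xy_pow sc (Suc N) F m n c) - sc (of_nat (Suc N)) (mult_xy_pow sc N F (m - 1) n c)"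
proof -
  define g where "g k = F (m - int (Suc N) + int k) (n - int k) c" for k
  define A where "A N k = (of_nat (N choose k) * (-1) ^ k :: complex)" for N k
  have absorb: "A (Suc N) k * (of_nat (Suc N) - of_nat k) = of_nat (Suc N) * A N k"
    if "k \<le> Suc N" for k
  proof -
    have "(Suc N - k) * (Suc N choose k) = Suc N * (N choose k)"
      using binomial_absorb_comp[of "Suc N" k] by simp
    then have "(of_nat (Suc N) - of_nat k) * (of_nat (Suc N choose k) :: complex)
                 = of_nat (Suc N) * of_nat (N choose k)"
      using that by (metis of_nat_diff of_nat_mult)
    then show ?thesis unfolding A_def by (simp add: algebra_simps)
  qed
  have "mult_xy_pow sc (Suc N) (\<lambda>p q v. sc (of_int p) (F p q v)) m n c
      = (\<Sum>k\<le>Suc N. sc (A (Suc N) k * (of_int m - (of_nat (Suc N) - of_nat k))) (g k))"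
    unfolding mult_xy_pow_altdef g_def A_def by (simp add: algebra_simps)
  also have "\<dots> = (\<Sum>k\<le>Suc N. sc (of_int m) (sc (A (Suc N) k) (g k))
                                - sc (of_nat (Suc N)) (sc (A N k) (g k)))"
  proof (rule sum.cong[OF refl])
    fix k assume "k \<in> {..Suc N}"
    then have "A (Suc N) k * (of_int m - (of_nat (Suc N) - of_nat k))
                 = of_int m * A (Suc N) k - of_nat (Suc N) * A N k"
      using absorb by (simp add: right_diff_distrib mult.commute)
    then show "sc (A (Suc N) k * (of_int m - (of_nat (Suc N) - of_nat k))) (g k)
                 = sc (of_int m) (sc (A (Suc N) k) (g k)) - sc (of_nat (Suc N)) (sc (A N k) (g k))"
      by (simp add: scale_left_diff_distrib)
  qed
  also have "\<dots> = sc (of_int m) (\<Sum>k\<le>Suc N. sc (A (Suc N) k) (g k))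
                 - sc (of_nat (Suc N)) (\<Sum>k\<le>Suc N. sc (A N k) (g k))"
    by (simp only: sum_subtractf scale_sum_right)
  moreover have "mult_xy_pow sc (Suc N) F m n c = (\<Sum>k\<le>Suc N. sc (A (Suc N) k) (g k))"
    unfolding mult_xy_pow_altdef g_def A_def ..
  moreover have "mult_xy_pow sc N F (m - 1) n c = (\<Sum>k\<le>Suc N. sc (A N k) (g k))"
    unfolding mult_xy_pow_altdef g_def A_def by (simp add: algebra_simps)
  ultimately show ?thesis by simp
qed

end

section \<open>Locality with a field and uniqueness\<close>

text \<open>A family of operators F p (the coefficients of a formal series F(x)) is local with the
  field Y(b,y) when (x - y)^N [F(x), Y(b,y)] = 0 for some N; s is the sign of the supercommutator.\<close>

definition field_bracket ::
  "(complex \<Rightarrow> 'v \<Rightarrow> 'v::ab_group_add) \<Rightarrow> ('v \<Rightarrow> int \<Rightarrow> 'v \<Rightarrow> 'v) \<Rightarrow> 'v \<Rightarrow> complex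
     \<Rightarrow> (int \<Rightarrow> 'v \<Rightarrow> 'v) \<Rightarrow> int \<Rightarrow> int \<Rightarrow> 'v \<Rightarrow> 'v" where
  "field_bracket sc Yc b s F = (\<lambda>p q v. F p (Yc b q v) - sc s (Yc b q (F p v)))"

definition local_with ::
  "(complex \<Rightarrow> 'v \<Rightarrow> 'v::ab_group_add) \<Rightarrow> ('v \<Rightarrow> int \<Rightarrow> 'v \<Rightarrow> 'v) \<Rightarrow> 'v \<Rightarrow> complex
     \<Rightarrow> (int \<Rightarrow> 'v \<Rightarrow> 'v) \<Rightarrow> bool" where
  "local_with sc Yc b s F \<longleftrightarrow> (\<exists>N. \<forall>m n c. mult_xy_pow sc N (field_bracket sc Yc b s F) m n c = 0)"

lemma local_op_iff_local_with:
  "local_op sc P Yc X \<longleftrightarrow>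
     (\<forall>a b pa pb. homog P a pa \<longrightarrow> homog P b pb \<longrightarrow>
        local_with sc Yc b (super_sign pa pb) (\<lambda>p. sop_comm X (Yc a p)))"
  unfolding local_op_def local_with_def field_bracket_def ..

locale vertex_alg =
  fixes sc :: "complex \<Rightarrow> 'v::ab_group_add \<Rightarrow> 'v"
    and P :: "'v \<Rightarrow> 'v" and Yc :: "'v \<Rightarrow> int \<Rightarrow> 'v \<Rightarrow> 'v" and vac :: 'v and T :: "'v \<Rightarrow> 'v"
  assumes vertex_algebra: "vertex_algebra sc P Yc vac T"
begin

sublocale complex_vs sc
  using vertex_algebra by (simp add: vertex_algebra_def complex_vs_def)

lemma field_linear: "Vector_Spaces.linear sc sc (Yc a n)"
  and field_linear_state: "Vector_Spaces.linear sc sc (\<lambda>a. Yc a n b)"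
  and parity_linear: "Vector_Spaces.linear sc sc P"
  and parity_involution: "P (P v) = v"
  and translation_linear: "Vector_Spaces.linear sc sc T"
  and translation_vacuum: "T vac = 0"
  and vacuum_field: "Yc vac n b = (if n = 0 then b else 0)"
  and field_vacuum_neg: "n < 0 \<Longrightarrow> Yc a n vac = 0"
  and field_vacuum_0: "Yc a 0 vac = a"
  and translation_bracket: "sop_comm T (Yc a n) b = sc (of_int (n + 1)) (Yc a (n + 1) b)"
  and fields_local: "local_fields sc P Yc"
  using vertex_algebra by (simp_all add: vertex_algebra_def)

lemmas field_add = linear_map_add[OF field_linear]
  and field_diff = linear_map_diff[OF field_linear]
  and field_neg = linear_map_neg[OF field_linear]
  and field_scale = linear_map_scale[OF field_linear]
  and field_zero = linear_map_zero[OF field_linear]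
  and field_sum = linear_map_sum[OF field_linear]
  and field_add_state = linear_map_add[OF field_linear_state]

lemma translation_field_vacuum: "T (Yc a p vac) = sc (of_int (p + 1)) (Yc a (p + 1) vac)"
  using translation_bracket[of a p vac] by (simp add: sop_comm_def translation_vacuum field_zero)

lemma field_bracket_add:
  "field_bracket sc Yc b s (\<lambda>p v. F p v + G p v)
     = (\<lambda>p q v. field_bracket sc Yc b s F p q v + field_bracket sc Yc b s G p q v)"
  by (simp add: field_bracket_def field_add scale_right_distrib algebra_simps)

lemma field_bracket_diff:
  "field_bracket sc Yc b s (\<lambda>p v. F p v - G p v)
     = (\<lambda>p q v. field_bracket sc Yc b s F p q v - field_bracket sc Yc b s G p q v)"
  by (simp add: field_bracket_def field_diff scale_right_diff_distrib algebra_simps)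

lemma field_bracket_scale:
  "field_bracket sc Yc b s (\<lambda>p v. sc (k p) (F p v)) = (\<lambda>p q v. sc (k p) (field_bracket sc Yc b s F p q v))"
  by (simp add: field_bracket_def field_scale scale_right_diff_distrib mult.commute)

lemma local_with_cong:
  "local_with sc Yc b s F \<Longrightarrow> (\<And>p v. F p v = G p v) \<Longrightarrow> local_with sc Yc b s G"
  by (metis ext)

lemma local_with_zero: "local_with sc Yc b s (\<lambda>p v. 0)"
  unfolding local_with_def field_bracket_def by (auto simp: field_zero mult_xy_pow_zero)

lemma local_with_add_diff:
  assumes "local_with sc Yc b s F" and "local_with sc Yc b s G"
  shows local_with_add: "local_with sc Yc b s (\<lambda>p v. F p v + G p v)"
    and local_with_diff: "local_with sc Yc b s (\<lambda>p v. F p v - G p v)"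
proof -
  obtain N1 N2
    where "\<forall>m n c. mult_xy_pow sc N1 (field_bracket sc Yc b s F) m n c = 0"
      and "\<forall>m n c. mult_xy_pow sc N2 (field_bracket sc Yc b s G) m n c = 0"
    using assms unfolding local_with_def by blast
  then have "mult_xy_pow sc (N1 + N2) (field_bracket sc Yc b s F) m n c = 0"
    and "mult_xy_pow sc (N1 + N2) (field_bracket sc Yc b s G) m n c = 0" for m n c
    by (simp_all add: mult_xy_pow_vanishes_mono)
  then show "local_with sc Yc b s (\<lambda>p v. F p v + G p v)" "local_with sc Yc b s (\<lambda>p v. F p v - G p v)"
    unfolding local_with_def field_bracket_add field_bracket_diff mult_xy_pow_add mult_xy_pow_diff
    by (auto intro!: exI[of _ "N1 + N2"])
qed

lemma local_with_scale:
  "local_with sc Yc b s F \<Longrightarrow> local_with sc Yc b s (\<lambda>p v. sc k (F p v))"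
  using field_bracket_scale[where k = "\<lambda>_. k"] unfolding local_with_def by (simp add: mult_xy_pow_scale)

lemma local_with_shift:
  "local_with sc Yc b s F \<Longrightarrow> local_with sc Yc b s (\<lambda>p v. F (p - j) v)"
proof -
  have "field_bracket sc Yc b s (\<lambda>p. F (p - j)) = (\<lambda>p q v. field_bracket sc Yc b s F (p - j) q v)"
    by (simp add: field_bracket_def)
  then show "local_with sc Yc b s F \<Longrightarrow> local_with sc Yc b s (\<lambda>p v. F (p - j) v)"
    unfolding local_with_def by (auto simp: mult_xy_pow_shift)
qed

lemma local_with_deriv:
  assumes "local_with sc Yc b s F"
  shows "local_with sc Yc b s (\<lambda>p v. sc (of_int p) (F p v))"
proof -
  obtain N where N: "\<forall>m n c. mult_xy_pow sc N (field_bracket sc Yc b s F) m n c = 0"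
    using assms unfolding local_with_def by blast
  then have "mult_xy_pow sc (Suc N) (field_bracket sc Yc b s F) m n c = 0" for m n c
    by (simp add: mult_xy_pow_vanishes_mono)
  then show ?thesis
    unfolding local_with_def field_bracket_scale[where k = of_int]
    using N by (intro exI[of _ "Suc N"]) (simp add: mult_xy_pow_deriv)
qed

lemma local_with_sum:
  "finite I \<Longrightarrow> (\<And>i. i \<in> I \<Longrightarrow> local_with sc Yc b s (F i))
     \<Longrightarrow> local_with sc Yc b s (\<lambda>p v. \<Sum>i\<in>I. F i p v)"
proof (induction I rule: finite_induct)
  case empty
  then show ?case by (simp add: local_with_zero)
next
  case (insert i I)
  then have "local_with sc Yc b s (\<lambda>p v. F i p v + (\<Sum>i\<in>I. F i p v))"
    by (intro local_with_add) auto
  then show ?case using insert(1,2) by simp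
qed

text \<open>Goddard's uniqueness argument: the coefficient of x^(p+N) y^0 of
  (x - y)^N [F(x), Y(b,y)] applied to the vacuum is F p b, because Y(b,y) vac has no negative
  powers of y and F kills the vacuum.\<close>

lemma local_with_vanishing_on_vacuum:
  assumes "local_with sc Yc b s F" and "\<And>p. F p vac = 0" and "\<And>p. F p 0 = 0"
  shows "F p b = 0"
proof -
  obtain N where N: "\<forall>m n c. mult_xy_pow sc N (field_bracket sc Yc b s F) m n c = 0"
    using assms(1) unfolding local_with_def by blast
  have "mult_xy_pow sc N (field_bracket sc Yc b s F) (p + int N) 0 vac = (\<Sum>k\<le>N. if k = 0 then F p b else 0)"
    unfolding mult_xy_pow_altdef
    by (rule sum.cong[OF refl])
       (auto simp: field_bracket_def assms(2,3) field_zero field_vacuum_0 field_vacuum_neg)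
  then show ?thesis using N by simp
qed

lemma parity_decomposition:
  obtains v0 v1 where "v = v0 + v1" and "homog P v0 False" and "homog P v1 True"
proof
  show "v = sc (1/2) (v + P v) + sc (1/2) (v - P v)"
    by (simp add: scale_right_distrib[symmetric] scale_two[symmetric])
  show "homog P (sc (1/2) (v + P v)) False"
    unfolding homog_def
    by (simp add: linear_map_scale[OF parity_linear] linear_map_add[OF parity_linear] parity_involution add.commute)
  show "homog P (sc (1/2) (v - P v)) True"
    unfolding homog_def
    by (simp add: linear_map_scale[OF parity_linear] linear_map_diff[OF parity_linear] parity_involution
        flip: scale_minus_right)
qed

lemma homog_even_op:
  "even_op P X \<Longrightarrow> Vector_Spaces.linear sc sc X \<Longrightarrow> homog P a pa \<Longrightarrow> homog P (X a) pa"
  unfolding homog_def even_op_def by (metis linear_map_neg)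

lemma local_with_field:
  "homog P a pa \<Longrightarrow> homog P b pb \<Longrightarrow> local_with sc Yc b (super_sign pa pb) (Yc a)"
  using fields_local unfolding local_fields_def local_with_def field_bracket_def by blast

lemma local_with_image_field:
  "homog P a pa \<Longrightarrow> homog P b pb \<Longrightarrow> even_op P X \<Longrightarrow> Vector_Spaces.linear sc sc X
     \<Longrightarrow> local_with sc Yc b (super_sign pa pb) (Yc (X a))"
  using local_with_field homog_even_op by blast

lemma local_with_translation_formula:
  assumes "homog P a pa" and "homog P b pb"
  shows "local_with sc Yc b (super_sign pa pb) (\<lambda>p v. sc (of_int (p + 1)) (Yc a (p + 1) v))"
  using local_with_shift[OF local_with_deriv[OF local_with_field[OF assms]], of "-1"] by simp

text \<open>Uniqueness applies to homogeneous a and b only; additivity of R extends the equation.\<close>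

lemma bracket_eq_if_local:
  assumes X_linear: "Vector_Spaces.linear sc sc X"
    and X_local: "local_op sc P Yc X" and X_vacuum: "X vac = 0"
    and R_local: "\<And>a b pa pb. homog P a pa \<Longrightarrow> homog P b pb \<Longrightarrow> local_with sc Yc b (super_sign pa pb) (R a)"
    and R_vacuum: "\<And>a p. X (Yc a p vac) = R a p vac"
    and R_add: "\<And>a p x y. R a p (x + y) = R a p x + R a p y"
    and R_add_state: "\<And>a1 a2 p y. R (a1 + a2) p y = R a1 p y + R a2 p y"
  shows "sop_comm X (Yc a p) b = R a p b"
proof -
  have R_zero: "R a p 0 = 0" for a p
    using R_add[of a p 0 0] by simp
  have homog_case: "sop_comm X (Yc a p) b = R a p b" if "homog P a pa" and "homog P b pb" for a b pa pb
  proof -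
    have "local_with sc Yc b (super_sign pa pb) (\<lambda>p. sop_comm X (Yc a p))"
      using X_local that unfolding local_op_iff_local_with by blast
    from local_with_diff[OF this R_local[OF that]] have "sop_comm X (Yc a p) b - R a p b = 0"
      by (rule local_with_vanishing_on_vacuum)
         (simp_all add: sop_comm_def X_vacuum field_zero R_vacuum R_zero linear_map_zero[OF X_linear])
    then show ?thesis by simp
  qed
  have homog_state_case: "sop_comm X (Yc a p) b = R a p b" if "homog P a pa" for a pa
  proof -
    obtain b0 b1 where b: "b = b0 + b1" "homog P b0 False" "homog P b1 True"
      by (rule parity_decomposition)
    show ?thesis
      using homog_case[OF that b(2)] homog_case[OF that b(3)]
      by (simp add: b(1) sop_comm_def field_add linear_map_add[OF X_linear] R_add algebra_simps)
  qed
  obtain a0 a1 where a: "a = a0 + a1" "homog P a0 False" "homog P a1 True"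
    by (rule parity_decomposition)
  show ?thesis
    using homog_state_case[OF a(2)] homog_state_case[OF a(3)]
    by (simp add: a(1) sop_comm_def field_add_state linear_map_add[OF X_linear] R_add_state algebra_simps)
qed

lemma local_op_if_bracket_eq:
  assumes "\<And>a p v. sop_comm X (Yc a p) v = R a p v"
    and "\<And>a b pa pb. homog P a pa \<Longrightarrow> homog P b pb \<Longrightarrow> local_with sc Yc b (super_sign pa pb) (R a)"
  shows "local_op sc P Yc X"
  unfolding local_op_iff_local_with using assms by (metis local_with_cong)

lemma local_op_zero: "local_op sc P Yc (\<lambda>v. 0)"
  by (rule local_op_if_bracket_eq[where R = "\<lambda>a p v. 0"]) (simp_all add: sop_comm_def field_zero local_with_zero)

lemma local_op_uminus:
  assumes "local_op sc P Yc X"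
  shows "local_op sc P Yc (\<lambda>v. - X v)"
proof (rule local_op_if_bracket_eq[where R = "\<lambda>a p v. sc (-1) (sop_comm X (Yc a p) v)"])
  show "sop_comm (\<lambda>v. - X v) (Yc a p) v = sc (-1) (sop_comm X (Yc a p) v)" for a p v
    by (simp add: sop_comm_def field_neg)
  show "local_with sc Yc b (super_sign pa pb) (\<lambda>p v. sc (-1) (sop_comm X (Yc a p) v))"
    if "homog P a pa" and "homog P b pb" for a b pa pb
  proof -
    have "local_with sc Yc b (super_sign pa pb) (\<lambda>p. sop_comm X (Yc a p))"
      using assms that unfolding local_op_iff_local_with by blast
    then show ?thesis by (rule local_with_scale)
  qed
qed

end

section \<open>The action of c_D\<close>

text \<open>The commutation relations coefficientwise: multiplication by x shifts the index of a
  coefficient by one and x \<partial>_x multiplies the n-th coefficient by n.\<close>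

definition cD_field_brackets ::
  "(complex \<Rightarrow> 'v \<Rightarrow> 'v::ab_group_add) \<Rightarrow> ('v \<Rightarrow> int \<Rightarrow> 'v \<Rightarrow> 'v) \<Rightarrow> nat \<Rightarrow> (nat \<Rightarrow> 'v \<Rightarrow> 'v)
     \<Rightarrow> ('v \<Rightarrow> 'v) \<Rightarrow> (nat \<Rightarrow> nat \<Rightarrow> 'v \<Rightarrow> 'v) \<Rightarrow> (nat \<Rightarrow> 'v \<Rightarrow> 'v) \<Rightarrow> bool" where
  "cD_field_brackets sc Yc D Tr H Om C \<longleftrightarrow>
     (\<forall>a n b.
        sop_comm H (Yc a n) b = Yc (H a) n b + sc (of_int n) (Yc a n b) \<and>
        sop_comm (C 1) (Yc a n) b =
          Yc (C 1 a) n b - sc 2 (Yc (H a) (n - 1) b) - sc (of_int (n - 1)) (Yc a (n - 1) b) \<and>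
        (\<forall>\<alpha>\<in>{2..D}. \<forall>\<beta>\<in>{2..D}.
          sop_comm (Tr \<alpha>) (Yc a n) b = Yc (Tr \<alpha> a) n b \<and>
          sop_comm (Om \<alpha> \<beta>) (Yc a n) b = Yc (Om \<alpha> \<beta> a) n b \<and>
          sop_comm (Om 1 \<alpha>) (Yc a n) b = Yc (Om 1 \<alpha> a) n b + Yc (Tr \<alpha> a) (n - 1) b \<and>
          sop_comm (C \<alpha>) (Yc a n) b =
            Yc (C \<alpha> a) n b + sc 2 (Yc (Om 1 \<alpha> a) (n - 1) b) + Yc (Tr \<alpha> a) (n - 2) b))"

locale vertex_alg_cD = vertex_alg sc P Yc vac "Tr 1"
  for sc :: "complex \<Rightarrow> 'v::ab_group_add \<Rightarrow> 'v" and P Yc vac and Tr :: "nat \<Rightarrow> 'v \<Rightarrow> 'v" +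
  fixes D :: nat and H :: "'v \<Rightarrow> 'v" and Om :: "nat \<Rightarrow> nat \<Rightarrow> 'v \<Rightarrow> 'v" and C :: "nat \<Rightarrow> 'v \<Rightarrow> 'v"
  assumes cD_action: "cD_action sc P D Tr H Om C" and one_le_D: "1 \<le> D"
begin

declare One_nat_def [simp del] \<comment> \<open>otherwise the translation Tr 1 is rewritten to Tr (Suc 0)\<close>

lemma H_linear: "Vector_Spaces.linear sc sc H"
  and H_even: "even_op P H"
  using cD_action[unfolded cD_action_def] by meson+

lemma
  assumes "\<alpha> \<in> {1..D}"
  shows Tr_linear: "Vector_Spaces.linear sc sc (Tr \<alpha>)"
    and Tr_even: "even_op P (Tr \<alpha>)"
    and C_linear: "Vector_Spaces.linear sc sc (C \<alpha>)"
    and C_even: "even_op P (C \<alpha>)"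
    and H_Tr_comm: "sop_comm H (Tr \<alpha>) v = Tr \<alpha> v"
  using cD_action[unfolded cD_action_def] assms by meson+

lemma
  assumes "\<alpha> \<in> {1..D}" and "\<beta> \<in> {1..D}"
  shows Om_linear: "Vector_Spaces.linear sc sc (Om \<alpha> \<beta>)"
    and Om_even: "even_op P (Om \<alpha> \<beta>)"
    and Om_antisym: "Om \<alpha> \<beta> v = - Om \<beta> \<alpha> v"
    and Tr_Tr_comm: "sop_comm (Tr \<alpha>) (Tr \<beta>) v = 0"
    and Tr_C_comm: "sop_comm (Tr \<alpha>) (C \<beta>) v = sc 2 ((if \<alpha> = \<beta> then H v else 0) - Om \<alpha> \<beta> v)"
  using cD_action[unfolded cD_action_def] assms by meson+

lemma Om_Tr_comm:
  "\<alpha> \<in> {1..D} \<Longrightarrow> \<beta> \<in> {1..D} \<Longrightarrow> \<gamma> \<in> {1..D} \<Longrightarrow>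
     sop_comm (Om \<alpha> \<beta>) (Tr \<gamma>) v = (if \<alpha> = \<gamma> then Tr \<beta> v else 0) - (if \<beta> = \<gamma> then Tr \<alpha> v else 0)"
  using cD_action[unfolded cD_action_def] by meson

lemma one_mem: "1 \<in> {1..D}"
  using one_le_D by simp

lemma mem_of_ge_2: "\<alpha> \<in> {2..D} \<Longrightarrow> \<alpha> \<in> {1..D}"
  by simp

lemma Om_self:
  assumes "\<alpha> \<in> {1..D}"
  shows "Om \<alpha> \<alpha> v = 0"
proof -
  have "sc 2 (Om \<alpha> \<alpha> v) = 0"
    using Om_antisym[OF assms assms, of v] by (simp add: scale_two eq_neg_iff_add_eq_0)
  then show ?thesis by simp
qed

lemma Tr_translation: "\<alpha> \<in> {1..D} \<Longrightarrow> Tr \<alpha> (Tr 1 v) = Tr 1 (Tr \<alpha> v)"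
  using Tr_Tr_comm[OF _ one_mem, of \<alpha> v] by (simp add: sop_comm_def)

lemma Om_translation: "\<alpha> \<in> {2..D} \<Longrightarrow> \<beta> \<in> {2..D} \<Longrightarrow> Om \<alpha> \<beta> (Tr 1 v) = Tr 1 (Om \<alpha> \<beta> v)"
  using Om_Tr_comm[OF mem_of_ge_2 mem_of_ge_2 one_mem, of \<alpha> \<beta> v] by (simp add: sop_comm_def)

lemma Om1_translation: "\<alpha> \<in> {2..D} \<Longrightarrow> Om 1 \<alpha> (Tr 1 v) = Tr 1 (Om 1 \<alpha> v) + Tr \<alpha> v"
  using Om_Tr_comm[OF one_mem mem_of_ge_2 one_mem, of \<alpha> v] by (simp add: sop_comm_def algebra_simps)

lemma H_translation: "H (Tr 1 v) = Tr 1 (H v) + Tr 1 v"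
  using H_Tr_comm[OF one_mem, of v] by (simp add: sop_comm_def algebra_simps)

lemma C_translation: "\<alpha> \<in> {2..D} \<Longrightarrow> C \<alpha> (Tr 1 v) = Tr 1 (C \<alpha> v) + sc 2 (Om 1 \<alpha> v)"
  using Tr_C_comm[OF one_mem mem_of_ge_2, of \<alpha> v] by (simp add: sop_comm_def algebra_simps)

lemma C1_translation: "C 1 (Tr 1 v) = Tr 1 (C 1 v) - sc 2 (H v)"
  using Tr_C_comm[OF one_mem one_mem, of v] by (simp add: sop_comm_def Om_self[OF one_mem] algebra_simps)

lemma vacuum_coeff_if_commutes_with_translation:
  assumes X_linear: "Vector_Spaces.linear sc sc X" and X_T: "\<And>v. X (Tr 1 v) = Tr 1 (X v)"
  shows "X (Yc a p vac) = Yc (X a) p vac"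
proof (induction p rule: int_induct_from_zero)
  case (negative p)
  then show ?case by (simp add: field_vacuum_neg linear_map_zero[OF X_linear])
next
  case zero
  then show ?case by (simp add: field_vacuum_0)
next
  case (step p)
  have "sc (of_int (p + 1)) (X (Yc a (p + 1) vac)) = X (Tr 1 (Yc a p vac))"
    by (simp add: translation_field_vacuum linear_map_scale[OF X_linear])
  also have "\<dots> = Tr 1 (Yc (X a) p vac)"
    by (simp only: X_T step.IH)
  also have "\<dots> = sc (of_int (p + 1)) (Yc (X a) (p + 1) vac)"
    by (rule translation_field_vacuum)
  finally show ?case using step(1) by (rule scale_of_int_succ_cancel[rotated])
qed

lemma H_vacuum_coeff: "H (Yc a p vac) = Yc (H a) p vac + sc (of_int p) (Yc a p vac)"
proof (induction p rule: int_induct_from_zero)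
  case (negative p)
  then show ?case by (simp add: field_vacuum_neg linear_map_zero[OF H_linear])
next
  case zero
  then show ?case by (simp add: field_vacuum_0)
next
  case (step p)
  have "sc (of_int (p + 1)) (H (Yc a (p + 1) vac)) = H (Tr 1 (Yc a p vac))"
    by (simp add: translation_field_vacuum linear_map_scale[OF H_linear])
  also have "\<dots> = Tr 1 (Yc (H a) p vac + sc (of_int p) (Yc a p vac)) + Tr 1 (Yc a p vac)"
    by (simp add: H_translation step.IH)
  also have "\<dots> = sc (of_int (p + 1)) (Yc (H a) (p + 1) vac + sc (of_int (p + 1)) (Yc a (p + 1) vac))"
    by (simp add: translation_field_vacuum linear_map_add[OF translation_linear]
        linear_map_scale[OF translation_linear] algebra_simps)
  finally show ?case using step(1) by (rule scale_of_int_succ_cancel[rotated])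
qed

lemma Tr_vacuum_coeff: "\<alpha> \<in> {1..D} \<Longrightarrow> Tr \<alpha> (Yc a p vac) = Yc (Tr \<alpha> a) p vac"
  by (rule vacuum_coeff_if_commutes_with_translation[OF Tr_linear Tr_translation])

lemma Om_vacuum_coeff:
  "\<alpha> \<in> {2..D} \<Longrightarrow> \<beta> \<in> {2..D} \<Longrightarrow> Om \<alpha> \<beta> (Yc a p vac) = Yc (Om \<alpha> \<beta> a) p vac"
  by (rule vacuum_coeff_if_commutes_with_translation[OF Om_linear[OF mem_of_ge_2 mem_of_ge_2] Om_translation])

lemma Om1_vacuum_coeff:
  assumes \<alpha>: "\<alpha> \<in> {2..D}"
  shows "Om 1 \<alpha> (Yc a p vac) = Yc (Om 1 \<alpha> a) p vac + Yc (Tr \<alpha> a) (p - 1) vac"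
proof (induction p rule: int_induct_from_zero)
  case (negative p)
  then show ?case by (simp add: field_vacuum_neg linear_map_zero[OF Om_linear[OF one_mem mem_of_ge_2[OF \<alpha>]]])
next
  case zero
  then show ?case by (simp add: field_vacuum_0 field_vacuum_neg)
next
  case (step p)
  have "sc (of_int (p + 1)) (Om 1 \<alpha> (Yc a (p + 1) vac)) = Om 1 \<alpha> (Tr 1 (Yc a p vac))"
    by (simp add: translation_field_vacuum linear_map_scale[OF Om_linear[OF one_mem mem_of_ge_2[OF \<alpha>]]])
  also have "\<dots> = Tr 1 (Yc (Om 1 \<alpha> a) p vac + Yc (Tr \<alpha> a) (p - 1) vac) + Yc (Tr \<alpha> a) p vac"
    by (simp add: Om1_translation[OF \<alpha>] step.IH Tr_vacuum_coeff[OF mem_of_ge_2[OF \<alpha>]])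
  also have "\<dots> = sc (of_int (p + 1)) (Yc (Om 1 \<alpha> a) (p + 1) vac + Yc (Tr \<alpha> a) (p + 1 - 1) vac)"
    using translation_field_vacuum[of _ "p - 1"]
    by (simp add: translation_field_vacuum linear_map_add[OF translation_linear] algebra_simps)
  finally show ?case using step(1) by (rule scale_of_int_succ_cancel[rotated])
qed

lemma C_vacuum_coeff:
  assumes \<alpha>: "\<alpha> \<in> {2..D}"
  shows "C \<alpha> (Yc a p vac) =
           Yc (C \<alpha> a) p vac + sc 2 (Yc (Om 1 \<alpha> a) (p - 1) vac) + Yc (Tr \<alpha> a) (p - 2) vac"
proof (induction p rule: int_induct_from_zero)
  case (negative p)
  then show ?case by (simp add: field_vacuum_neg linear_map_zero[OF C_linear[OF mem_of_ge_2[OF \<alpha>]]])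
next
  case zero
  then show ?case by (simp add: field_vacuum_0 field_vacuum_neg)
next
  case (step p)
  have "sc (of_int (p + 1)) (C \<alpha> (Yc a (p + 1) vac)) = C \<alpha> (Tr 1 (Yc a p vac))"
    by (simp add: translation_field_vacuum linear_map_scale[OF C_linear[OF mem_of_ge_2[OF \<alpha>]]])
  also have "\<dots> = Tr 1 (Yc (C \<alpha> a) p vac + sc 2 (Yc (Om 1 \<alpha> a) (p - 1) vac) + Yc (Tr \<alpha> a) (p - 2) vac)
                   + sc 2 (Yc (Om 1 \<alpha> a) p vac + Yc (Tr \<alpha> a) (p - 1) vac)"
    by (simp add: C_translation[OF \<alpha>] step.IH Om1_vacuum_coeff[OF \<alpha>])
  also have "\<dots> = sc (of_int (p + 1)) (Yc (C \<alpha> a) (p + 1) vac + sc 2 (Yc (Om 1 \<alpha> a) (p + 1 - 1) vac)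
                   + Yc (Tr \<alpha> a) (p + 1 - 2) vac)"
    using translation_field_vacuum[of _ "p - 1"] translation_field_vacuum[of _ "p - 2"]
    by (simp add: translation_field_vacuum linear_map_add[OF translation_linear]
        linear_map_scale[OF translation_linear] scale_two algebra_simps)
  finally show ?case using step(1) by (rule scale_of_int_succ_cancel[rotated])
qed

lemma C1_vacuum_coeff:
  "C 1 (Yc a p vac) = Yc (C 1 a) p vac - sc 2 (Yc (H a) (p - 1) vac) - sc (of_int (p - 1)) (Yc a (p - 1) vac)"
proof (induction p rule: int_induct_from_zero)
  case (negative p)
  then show ?case by (simp add: field_vacuum_neg linear_map_zero[OF C_linear[OF one_mem]])
next
  case zero
  then show ?case by (simp add: field_vacuum_0 field_vacuum_neg)
next
  case (step p)
  have "sc (of_int (p + 1)) (C 1 (Yc a (p + 1) vac)) = C 1 (Tr 1 (Yc a p vac))"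
    by (simp add: translation_field_vacuum linear_map_scale[OF C_linear[OF one_mem]])
  also have "\<dots> = Tr 1 (Yc (C 1 a) p vac - sc 2 (Yc (H a) (p - 1) vac) - sc (of_int (p - 1)) (Yc a (p - 1) vac))
                   - sc 2 (Yc (H a) p vac + sc (of_int p) (Yc a p vac))"
    by (simp add: C1_translation step.IH H_vacuum_coeff)
  also have "\<dots> = sc (of_int (p + 1)) (Yc (C 1 a) (p + 1) vac - sc 2 (Yc (H a) (p + 1 - 1) vac)
                   - sc (of_int (p + 1 - 1)) (Yc a (p + 1 - 1) vac))"
  proof -
    have "Tr 1 (Yc x (p - 1) vac) = sc (of_int p) (Yc x p vac)" for x
      using translation_field_vacuum[of x "p - 1"] by simp
    then show ?thesis
      by (simp add: translation_field_vacuum linear_map_add[OF translation_linear]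
          linear_map_diff[OF translation_linear] linear_map_scale[OF translation_linear]
          scale_two scale_mult_two algebra_simps)
  qed
  finally show ?case using step(1) by (rule scale_of_int_succ_cancel[rotated])
qed

context
  fixes a b :: 'v and pa pb :: bool
  assumes a: "homog P a pa" and b: "homog P b pb"
begin

lemma local_with_H_formula:
  "local_with sc Yc b (super_sign pa pb) (\<lambda>p v. Yc (H a) p v + sc (of_int p) (Yc a p v))"
  by (intro local_with_add local_with_deriv local_with_field[OF a b]
        local_with_image_field[OF a b H_even H_linear])

lemma local_with_C1_formula:
  "local_with sc Yc b (super_sign pa pb)
     (\<lambda>p v. Yc (C 1 a) p v - sc 2 (Yc (H a) (p - 1) v) - sc (of_int (p - 1)) (Yc a (p - 1) v))"
  by (intro local_with_diff local_with_scale local_with_shift[where F = "\<lambda>p v. Yc (H a) p v"]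
        local_with_shift[where F = "\<lambda>p v. sc (of_int p) (Yc a p v)"] local_with_deriv local_with_field[OF a b]
        local_with_image_field[OF a b H_even H_linear] local_with_image_field[OF a b C_even C_linear] one_mem)

lemma local_with_Om1_formula:
  "\<alpha> \<in> {2..D} \<Longrightarrow>
     local_with sc Yc b (super_sign pa pb) (\<lambda>p v. Yc (Om 1 \<alpha> a) p v + Yc (Tr \<alpha> a) (p - 1) v)"
  by (intro local_with_add local_with_shift[where F = "\<lambda>p v. Yc (Tr \<alpha> a) p v"]
        local_with_image_field[OF a b Om_even Om_linear] local_with_image_field[OF a b Tr_even Tr_linear]
        one_mem mem_of_ge_2)

lemma local_with_C_formula:
  "\<alpha> \<in> {2..D} \<Longrightarrow>
     local_with sc Yc b (super_sign pa pb)
       (\<lambda>p v. Yc (C \<alpha> a) p v + sc 2 (Yc (Om 1 \<alpha> a) (p - 1) v) + Yc (Tr \<alpha> a) (p - 2) v)"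
  by (intro local_with_add local_with_scale local_with_shift[where F = "\<lambda>p v. Yc (Tr \<alpha> a) p v"]
        local_with_shift[where F = "\<lambda>p v. Yc (Om 1 \<alpha> a) p v"]
        local_with_image_field[OF a b Om_even Om_linear] local_with_image_field[OF a b Tr_even Tr_linear]
        local_with_image_field[OF a b C_even C_linear] one_mem mem_of_ge_2)

end

lemma H_bracket_if_local:
  assumes "local_op sc P Yc H" and "H vac = 0"
  shows "sop_comm H (Yc a n) b = Yc (H a) n b + sc (of_int n) (Yc a n b)"
  by (rule bracket_eq_if_local[OF H_linear assms local_with_H_formula])
     (simp_all add: H_vacuum_coeff field_add field_add_state linear_map_add[OF H_linear] algebra_simps)

lemma C1_bracket_if_local:
  assumes "local_op sc P Yc (C 1)" and "C 1 vac = 0"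
  shows "sop_comm (C 1) (Yc a n) b =
           Yc (C 1 a) n b - sc 2 (Yc (H a) (n - 1) b) - sc (of_int (n - 1)) (Yc a (n - 1) b)"
  by (rule bracket_eq_if_local[OF C_linear[OF one_mem] assms local_with_C1_formula])
     (simp_all add: C1_vacuum_coeff field_add field_add_state linear_map_add[OF H_linear]
        linear_map_add[OF C_linear[OF one_mem]] algebra_simps)

lemma Tr_bracket_if_local:
  assumes "\<alpha> \<in> {1..D}" and "local_op sc P Yc (Tr \<alpha>)" and "Tr \<alpha> vac = 0"
  shows "sop_comm (Tr \<alpha>) (Yc a n) b = Yc (Tr \<alpha> a) n b"
  by (rule bracket_eq_if_local[OF Tr_linear[OF assms(1)] assms(2,3)
        local_with_image_field[OF _ _ Tr_even[OF assms(1)] Tr_linear[OF assms(1)]]])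
     (simp_all add: Tr_vacuum_coeff[OF assms(1)] field_add field_add_state
        linear_map_add[OF Tr_linear[OF assms(1)]])

lemma Om_bracket_if_local:
  assumes "\<alpha> \<in> {2..D}" and "\<beta> \<in> {2..D}" and "local_op sc P Yc (Om \<alpha> \<beta>)" and "Om \<alpha> \<beta> vac = 0"
  shows "sop_comm (Om \<alpha> \<beta>) (Yc a n) b = Yc (Om \<alpha> \<beta> a) n b"
proof -
  have \<alpha>: "\<alpha> \<in> {1..D}" and \<beta>: "\<beta> \<in> {1..D}"
    using assms(1,2) by auto
  show ?thesis
    by (rule bracket_eq_if_local[OF Om_linear[OF \<alpha> \<beta>] assms(3,4)
          local_with_image_field[OF _ _ Om_even[OF \<alpha> \<beta>] Om_linear[OF \<alpha> \<beta>]]])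
       (simp_all add: Om_vacuum_coeff[OF assms(1,2)] field_add field_add_state
          linear_map_add[OF Om_linear[OF \<alpha> \<beta>]])
qed

lemma Om1_bracket_if_local:
  assumes "\<alpha> \<in> {2..D}" and "local_op sc P Yc (Om 1 \<alpha>)" and "Om 1 \<alpha> vac = 0"
  shows "sop_comm (Om 1 \<alpha>) (Yc a n) b = Yc (Om 1 \<alpha> a) n b + Yc (Tr \<alpha> a) (n - 1) b"
  by (rule bracket_eq_if_local[OF Om_linear[OF one_mem mem_of_ge_2[OF assms(1)]] assms(2,3)
        local_with_Om1_formula[OF _ _ assms(1)]])
     (simp_all add: Om1_vacuum_coeff[OF assms(1)] field_add field_add_state algebra_simps
        linear_map_add[OF Om_linear[OF one_mem mem_of_ge_2[OF assms(1)]]]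
        linear_map_add[OF Tr_linear[OF mem_of_ge_2[OF assms(1)]]])

lemma C_bracket_if_local:
  assumes "\<alpha> \<in> {2..D}" and "local_op sc P Yc (C \<alpha>)" and "C \<alpha> vac = 0"
  shows "sop_comm (C \<alpha>) (Yc a n) b =
           Yc (C \<alpha> a) n b + sc 2 (Yc (Om 1 \<alpha> a) (n - 1) b) + Yc (Tr \<alpha> a) (n - 2) b"
  by (rule bracket_eq_if_local[OF C_linear[OF mem_of_ge_2[OF assms(1)]] assms(2,3)
        local_with_C_formula[OF _ _ assms(1)]])
     (simp_all add: C_vacuum_coeff[OF assms(1)] field_add field_add_state algebra_simps
        linear_map_add[OF C_linear[OF mem_of_ge_2[OF assms(1)]]]
        linear_map_add[OF Om_linear[OF one_mem mem_of_ge_2[OF assms(1)]]]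
        linear_map_add[OF Tr_linear[OF mem_of_ge_2[OF assms(1)]]])

lemma Tr_mem_cD_ops: "\<alpha> \<in> {1..D} \<Longrightarrow> Tr \<alpha> \<in> cD_ops sc D Tr H Om C"
  unfolding cD_ops_def
  by (intro CollectI exI[of _ "\<lambda>\<beta>. if \<beta> = \<alpha> then 1 else 0"] exI[of _ 0] exI[of _ "\<lambda>_ _. 0"]
        exI[of _ "\<lambda>_. 0"] allI)
     (simp add: sum_scale_indicator)

lemma H_mem_cD_ops: "H \<in> cD_ops sc D Tr H Om C"
  unfolding cD_ops_def
  by (intro CollectI exI[of _ "\<lambda>_. 0"] exI[of _ 1] exI[of _ "\<lambda>_ _. 0"] exI[of _ "\<lambda>_. 0"] allI) simp

lemma Om_mem_cD_ops:
  assumes \<alpha>: "\<alpha> \<in> {1..D}" and \<beta>: "\<beta> \<in> {1..D}"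
  shows "Om \<alpha> \<beta> \<in> cD_ops sc D Tr H Om C"
proof -
  let ?w = "\<lambda>\<gamma> \<delta>. if \<gamma> = \<alpha> then if \<delta> = \<beta> then 1 else 0 else 0"
  have "(\<Sum>\<gamma>\<in>{1..D}. \<Sum>\<delta>\<in>{1..D}. sc (?w \<gamma> \<delta>) (Om \<gamma> \<delta> v)) = Om \<alpha> \<beta> v" for v
  proof -
    have "(\<Sum>\<gamma>\<in>{1..D}. \<Sum>\<delta>\<in>{1..D}. sc (?w \<gamma> \<delta>) (Om \<gamma> \<delta> v))
            = (\<Sum>\<gamma>\<in>{1..D}. sc (if \<gamma> = \<alpha> then 1 else 0) (Om \<gamma> \<beta> v))"
      by (rule sum.cong) (auto simp: sum_scale_indicator[OF _ \<beta>])
    also have "\<dots> = Om \<alpha> \<beta> v"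
      by (simp add: sum_scale_indicator[OF _ \<alpha>])
    finally show ?thesis .
  qed
  then show ?thesis
    unfolding cD_ops_def
    by (intro CollectI exI[of _ "\<lambda>_. 0"] exI[of _ 0] exI[of _ ?w] exI[of _ "\<lambda>_. 0"] allI) simp
qed

lemma C_mem_cD_ops: "\<alpha> \<in> {1..D} \<Longrightarrow> C \<alpha> \<in> cD_ops sc D Tr H Om C"
  unfolding cD_ops_def
  by (intro CollectI exI[of _ "\<lambda>_. 0"] exI[of _ 0] exI[of _ "\<lambda>_ _. 0"]
        exI[of _ "\<lambda>\<beta>. if \<beta> = \<alpha> then 1 else 0"] allI)
     (simp add: sum_scale_indicator)

lemma bracket_cD_ops:
  assumes "\<And>v. X v = (\<Sum>\<alpha>\<in>{1..D}. sc (t \<alpha>) (Tr \<alpha> v)) + sc h (H v)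
        + (\<Sum>\<alpha>\<in>{1..D}. \<Sum>\<beta>\<in>{1..D}. sc (w \<alpha> \<beta>) (Om \<alpha> \<beta> v)) + (\<Sum>\<alpha>\<in>{1..D}. sc (c \<alpha>) (C \<alpha> v))"
  shows "sop_comm X (Yc a p) v =
           (\<Sum>\<alpha>\<in>{1..D}. sc (t \<alpha>) (sop_comm (Tr \<alpha>) (Yc a p) v)) + sc h (sop_comm H (Yc a p) v)
           + (\<Sum>\<alpha>\<in>{1..D}. \<Sum>\<beta>\<in>{1..D}. sc (w \<alpha> \<beta>) (sop_comm (Om \<alpha> \<beta>) (Yc a p) v))
           + (\<Sum>\<alpha>\<in>{1..D}. sc (c \<alpha>) (sop_comm (C \<alpha>) (Yc a p) v))"
  by (simp add: assms sop_comm_def field_add field_scale field_sum scale_right_diff_distrib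
      sum_subtractf algebra_simps)

lemma local_op_cD_ops:
  assumes "\<And>\<alpha>. \<alpha> \<in> {1..D} \<Longrightarrow> local_op sc P Yc (Tr \<alpha>)" and "local_op sc P Yc H"
    and "\<And>\<alpha> \<beta>. \<alpha> \<in> {1..D} \<Longrightarrow> \<beta> \<in> {1..D} \<Longrightarrow> local_op sc P Yc (Om \<alpha> \<beta>)"
    and "\<And>\<alpha>. \<alpha> \<in> {1..D} \<Longrightarrow> local_op sc P Yc (C \<alpha>)"
    and "X \<in> cD_ops sc D Tr H Om C"
  shows "local_op sc P Yc X"
proof -
  obtain t h w c where X: "\<And>v. X v = (\<Sum>\<alpha>\<in>{1..D}. sc (t \<alpha>) (Tr \<alpha> v)) + sc h (H v)
        + (\<Sum>\<alpha>\<in>{1..D}. \<Sum>\<beta>\<in>{1..D}. sc (w \<alpha> \<beta>) (Om \<alpha> \<beta> v)) + (\<Sum>\<alpha>\<in>{1..D}. sc (c \<alpha>) (C \<alpha> v))"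
    using assms(5) unfolding cD_ops_def by blast
  show ?thesis
    unfolding local_op_iff_local_with
  proof (intro allI impI)
    fix a b pa pb assume "homog P a pa" and "homog P b pb"
    then have generator: "local_with sc Yc b (super_sign pa pb) (\<lambda>p. sop_comm G (Yc a p))"
      if "local_op sc P Yc G" for G
      using that unfolding local_op_iff_local_with by blast
    show "local_with sc Yc b (super_sign pa pb) (\<lambda>p. sop_comm X (Yc a p))"
      unfolding bracket_cD_ops[OF X]
      by (intro local_with_add local_with_sum local_with_scale)
         (auto intro: generator assms(1-4) simp del: atLeastAtMost_iff)
  qed
qed

lemma vacuum_cD_ops:
  assumes "\<And>\<alpha>. \<alpha> \<in> {1..D} \<Longrightarrow> Tr \<alpha> vac = 0" and "H vac = 0"
    and "\<And>\<alpha> \<beta>. \<alpha> \<in> {1..D} \<Longrightarrow> \<beta> \<in> {1..D} \<Longrightarrow> Om \<alpha> \<beta> vac = 0"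
    and "\<And>\<alpha>. \<alpha> \<in> {1..D} \<Longrightarrow> C \<alpha> vac = 0"
    and "X \<in> cD_ops sc D Tr H Om C"
  shows "X vac = 0"
  using assms(5) unfolding cD_ops_def by (auto simp: assms(1-4))

lemma Om_cases:
  assumes "Q (\<lambda>v. 0)" and "\<And>X. Q X \<Longrightarrow> Q (\<lambda>v. - X v)"
    and "\<And>\<alpha> \<beta>. \<alpha> \<in> {2..D} \<Longrightarrow> \<beta> \<in> {2..D} \<Longrightarrow> Q (Om \<alpha> \<beta>)"
    and "\<And>\<alpha>. \<alpha> \<in> {2..D} \<Longrightarrow> Q (Om 1 \<alpha>)"
    and \<alpha>: "\<alpha> \<in> {1..D}" and \<beta>: "\<beta> \<in> {1..D}"
  shows "Q (Om \<alpha> \<beta>)"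
proof -
  consider "\<alpha> = 1" "\<beta> = 1" | "\<alpha> = 1" "\<beta> \<in> {2..D}" | "\<alpha> \<in> {2..D}" "\<beta> = 1" | "\<alpha> \<in> {2..D}" "\<beta> \<in> {2..D}"
    using \<alpha> \<beta> by fastforce
  then show ?thesis
  proof cases
    case 1
    then have "Om \<alpha> \<beta> = (\<lambda>v. 0)"
      using Om_self[OF one_mem] by (simp add: fun_eq_iff)
    then show ?thesis using assms(1) by simp
  next
    case 2
    then show ?thesis using assms(4) by simp
  next
    case 3
    have "Om \<alpha> 1 = (\<lambda>v. - Om 1 \<alpha> v)"
      using Om_antisym[OF \<alpha> one_mem] by (simp add: fun_eq_iff 3)
    then show ?thesis using assms(2,4) 3 by simp
  next
    case 4
    then show ?thesis by (rule assms(3))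
  qed
qed

lemma cD_field_bracketsD:
  assumes "cD_field_brackets sc Yc D Tr H Om C"
  shows H_bracket: "sop_comm H (Yc a n) b = Yc (H a) n b + sc (of_int n) (Yc a n b)"
    and C1_bracket: "sop_comm (C 1) (Yc a n) b =
          Yc (C 1 a) n b - sc 2 (Yc (H a) (n - 1) b) - sc (of_int (n - 1)) (Yc a (n - 1) b)"
    and Tr_bracket: "\<alpha> \<in> {2..D} \<Longrightarrow> sop_comm (Tr \<alpha>) (Yc a n) b = Yc (Tr \<alpha> a) n b"
    and Om_bracket: "\<alpha> \<in> {2..D} \<Longrightarrow> \<beta> \<in> {2..D} \<Longrightarrow> sop_comm (Om \<alpha> \<beta>) (Yc a n) b = Yc (Om \<alpha> \<beta> a) n b"
    and Om1_bracket: "\<alpha> \<in> {2..D} \<Longrightarrow>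
          sop_comm (Om 1 \<alpha>) (Yc a n) b = Yc (Om 1 \<alpha> a) n b + Yc (Tr \<alpha> a) (n - 1) b"
    and C_bracket: "\<alpha> \<in> {2..D} \<Longrightarrow> sop_comm (C \<alpha>) (Yc a n) b =
          Yc (C \<alpha> a) n b + sc 2 (Yc (Om 1 \<alpha> a) (n - 1) b) + Yc (Tr \<alpha> a) (n - 2) b"
  using assms[unfolded cD_field_brackets_def] by meson+

lemma local_if_cD_field_brackets:
  assumes brackets: "cD_field_brackets sc Yc D Tr H Om C" and X: "X \<in> cD_ops sc D Tr H Om C"
  shows "local_op sc P Yc X"
proof (rule local_op_cD_ops[OF _ _ _ _ X])
  fix \<alpha> assume \<alpha>: "\<alpha> \<in> {1..D}"
  show "local_op sc P Yc (Tr \<alpha>)"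
  proof (cases "\<alpha> = 1")
    case True
    show ?thesis
      unfolding True by (intro local_op_if_bracket_eq[OF translation_bracket] local_with_translation_formula)
  next
    case False
    then have "\<alpha> \<in> {2..D}" using \<alpha> by simp
    then show ?thesis
      by (intro local_op_if_bracket_eq[OF Tr_bracket[OF brackets]] local_with_image_field Tr_even Tr_linear \<alpha>)
  qed
  show "local_op sc P Yc (C \<alpha>)"
  proof (cases "\<alpha> = 1")
    case True
    show ?thesis
      unfolding True by (intro local_op_if_bracket_eq[OF C1_bracket[OF brackets]] local_with_C1_formula)
  next
    case False
    then have "\<alpha> \<in> {2..D}" using \<alpha> by simp
    then show ?thesis by (intro local_op_if_bracket_eq[OF C_bracket[OF brackets]] local_with_C_formula)
  qed
next
  show "local_op sc P Yc H"
    by (intro local_op_if_bracket_eq[OF H_bracket[OF brackets]] local_with_H_formula)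
next
  fix \<alpha> \<beta> assume "\<alpha> \<in> {1..D}" and "\<beta> \<in> {1..D}"
  then show "local_op sc P Yc (Om \<alpha> \<beta>)"
  proof (rule Om_cases[where Q = "local_op sc P Yc", rotated 4])
    show "local_op sc P Yc (Om \<alpha> \<beta>)" if "\<alpha> \<in> {2..D}" and "\<beta> \<in> {2..D}" for \<alpha> \<beta>
      using that
      by (intro local_op_if_bracket_eq[OF Om_bracket[OF brackets]] local_with_image_field Om_even Om_linear
          mem_of_ge_2)
    show "local_op sc P Yc (Om 1 \<alpha>)" if "\<alpha> \<in> {2..D}" for \<alpha>
      using that by (intro local_op_if_bracket_eq[OF Om1_bracket[OF brackets]] local_with_Om1_formula)
  qed (fact local_op_zero local_op_uminus)+
qed

text \<open>Taking a = b = vac and n = 0 in a bracket formula leaves X vac = 0, since Y(vac,x) = id.\<close>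

lemma vacuum_if_cD_field_brackets:
  assumes brackets: "cD_field_brackets sc Yc D Tr H Om C" and X: "X \<in> cD_ops sc D Tr H Om C"
  shows "X vac = 0"
proof (rule vacuum_cD_ops[OF _ _ _ _ X])
  fix \<alpha> assume "\<alpha> \<in> {1..D}"
  then have "\<alpha> = 1 \<or> \<alpha> \<in> {2..D}" by auto
  then show "Tr \<alpha> vac = 0"
    using Tr_bracket[OF brackets, of \<alpha> vac 0 vac]
    by (auto simp: translation_vacuum sop_comm_def vacuum_field field_vacuum_0)
next
  fix \<alpha> assume "\<alpha> \<in> {1..D}"
  then have "\<alpha> = 1 \<or> \<alpha> \<in> {2..D}" by auto
  then show "C \<alpha> vac = 0"
    using C1_bracket[OF brackets, of vac 0 vac] C_bracket[OF brackets, of \<alpha> vac 0 vac]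
    by (auto simp: sop_comm_def vacuum_field field_vacuum_0 field_vacuum_neg)
next
  show "H vac = 0"
    using H_bracket[OF brackets, of vac 0 vac] by (simp add: sop_comm_def vacuum_field field_vacuum_0)
next
  fix \<alpha> \<beta> assume "\<alpha> \<in> {1..D}" and "\<beta> \<in> {1..D}"
  then show "Om \<alpha> \<beta> vac = 0"
  proof (rule Om_cases[where Q = "\<lambda>X. X vac = 0", rotated 4])
    show "Om \<alpha> \<beta> vac = 0" if "\<alpha> \<in> {2..D}" and "\<beta> \<in> {2..D}" for \<alpha> \<beta>
      using Om_bracket[OF brackets that, of vac 0 vac] by (simp add: sop_comm_def vacuum_field field_vacuum_0)
    show "Om 1 \<alpha> vac = 0" if "\<alpha> \<in> {2..D}" for \<alpha>
      using Om1_bracket[OF brackets that, of vac 0 vac]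
      by (simp add: sop_comm_def vacuum_field field_vacuum_0 field_vacuum_neg)
  qed simp_all
qed

lemma cD_field_brackets_if_local:
  assumes local: "\<forall>X\<in>cD_ops sc D Tr H Om C. local_op sc P Yc X"
    and vacuum: "\<forall>X\<in>cD_ops sc D Tr H Om C. X vac = 0"
  shows "cD_field_brackets sc Yc D Tr H Om C"
  unfolding cD_field_brackets_def
proof (intro allI conjI ballI)
  have generator: "local_op sc P Yc G" "G vac = 0" if "G \<in> cD_ops sc D Tr H Om C" for G
    using local vacuum that by blast+
  fix a n b
  show "sop_comm H (Yc a n) b = Yc (H a) n b + sc (of_int n) (Yc a n b)"
    by (intro H_bracket_if_local generator H_mem_cD_ops)
  show "sop_comm (C 1) (Yc a n) b =
          Yc (C 1 a) n b - sc 2 (Yc (H a) (n - 1) b) - sc (of_int (n - 1)) (Yc a (n - 1) b)"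
    by (intro C1_bracket_if_local generator C_mem_cD_ops one_mem)
  fix \<alpha> \<beta> assume \<alpha>: "\<alpha> \<in> {2..D}" and \<beta>: "\<beta> \<in> {2..D}"
  note \<alpha>1 = mem_of_ge_2[OF \<alpha>] and \<beta>1 = mem_of_ge_2[OF \<beta>]
  show "sop_comm (Tr \<alpha>) (Yc a n) b = Yc (Tr \<alpha> a) n b"
    by (intro Tr_bracket_if_local generator Tr_mem_cD_ops \<alpha>1)
  show "sop_comm (Om \<alpha> \<beta>) (Yc a n) b = Yc (Om \<alpha> \<beta> a) n b"
    by (intro Om_bracket_if_local generator Om_mem_cD_ops \<alpha> \<beta> \<alpha>1 \<beta>1)
  show "sop_comm (Om 1 \<alpha>) (Yc a n) b = Yc (Om 1 \<alpha> a) n b + Yc (Tr \<alpha> a) (n - 1) b"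
    by (intro Om1_bracket_if_local generator Om_mem_cD_ops one_mem \<alpha> \<alpha>1)
  show "sop_comm (C \<alpha>) (Yc a n) b =
          Yc (C \<alpha> a) n b + sc 2 (Yc (Om 1 \<alpha> a) (n - 1) b) + Yc (Tr \<alpha> a) (n - 2) b"
    by (intro C_bracket_if_local generator C_mem_cD_ops \<alpha> \<alpha>1)
qed

theorem local_and_vacuum_iff_cD_field_brackets:
  "((\<forall>X\<in>cD_ops sc D Tr H Om C. local_op sc P Yc X) \<and> (\<forall>X\<in>cD_ops sc D Tr H Om C. X vac = 0))
     \<longleftrightarrow> cD_field_brackets sc Yc D Tr H Om C"
  using cD_field_brackets_if_local local_if_cD_field_brackets vacuum_if_cD_field_brackets by blast

end

theorem mainTheorem3:
  fixes sc :: "complex \<Rightarrow> 'v::ab_group_add \<Rightarrow> 'v"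
    and P :: "'v \<Rightarrow> 'v" and Yc :: "'v \<Rightarrow> int \<Rightarrow> 'v \<Rightarrow> 'v" and vac :: 'v
    and D :: nat and Tr :: "nat \<Rightarrow> 'v \<Rightarrow> 'v" and H :: "'v \<Rightarrow> 'v"
    and Om :: "nat \<Rightarrow> nat \<Rightarrow> 'v \<Rightarrow> 'v" and C :: "nat \<Rightarrow> 'v \<Rightarrow> 'v"
  assumes "D \<ge> 1"
    and "vertex_algebra sc P Yc vac (Tr 1)"
    and "cD_action sc P D Tr H Om C"
  shows "((\<forall>X\<in>cD_ops sc D Tr H Om C. local_op sc P Yc X) \<and>
          (\<forall>X\<in>cD_ops sc D Tr H Om C. X vac = 0))
     \<longleftrightarrow>
     (\<forall>a n b.
        sop_comm H (Yc a n) b = Yc (H a) n b + sc (of_int n) (Yc a n b) \<and>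
        sop_comm (C 1) (Yc a n) b =
          Yc (C 1 a) n b - sc 2 (Yc (H a) (n - 1) b) - sc (of_int (n - 1)) (Yc a (n - 1) b) \<and>
        (\<forall>\<alpha>\<in>{2..D}. \<forall>\<beta>\<in>{2..D}.
          sop_comm (Tr \<alpha>) (Yc a n) b = Yc (Tr \<alpha> a) n b \<and>
          sop_comm (Om \<alpha> \<beta>) (Yc a n) b = Yc (Om \<alpha> \<beta> a) n b \<and>
          sop_comm (Om 1 \<alpha>) (Yc a n) b = Yc (Om 1 \<alpha> a) n b + Yc (Tr \<alpha> a) (n - 1) b \<and>
          sop_comm (C \<alpha>) (Yc a n) b =
            Yc (C \<alpha> a) n b + sc 2 (Yc (Om 1 \<alpha> a) (n - 1) b) + Yc (Tr \<alpha> a) (n - 2) b))"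
proof -
  interpret vertex_alg_cD sc P Yc vac Tr D H Om C
    using assms by (simp add: vertex_alg_cD_def vertex_alg_def vertex_alg_cD_axioms_def)
  show ?thesis
    using local_and_vacuum_iff_cD_field_brackets unfolding cD_field_brackets_def .
qed

end
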